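(* Let $f\in\mathcal R^0(\mathbb R^2)$ and write $f=\frac{p}{q}$ on $\mathrm{dom}(f)$ with $p,q\in\mathbb R[x,y]$ coprime, $q\ge 0$ on $\mathbb R^2$ and $q$ nonvanishing on $\mathrm{dom}(f)$. Then $f\in\mathcal R^0_{[1]}(\mathbb R^2)$ if and only if $q$ is locally positive definite at every point $a\in\mathrm{pol}(f)$.
   Context: For $k\in\mathbb N\cup\{\infty\}$ and $n\ge 1$, $\mathcal R^k(\mathbb R^n)$ denotes the ring of $k$-regulous functions: functions $f:\mathbb R^n\to\mathbb R$ of class $C^k$ for which there exist a nonempty Zariski open set $U\subseteq\mathbb R^n$ and polynomials $p,q$ with $q$ nonvanishing on $U$ and $f=p/q$ on $U$. Such an $f$ determines a rational function; $\mathrm{dom}(f)$ is the largest Zariski open set on which this rational function is regular (i.e. of the form $p/q$ with $q$ nonvanishing there), and $\mathrm{pol}(f)=\mathbb R^n\setminus\mathrm{dom}(f)$. Functions in $\mathcal R^0$ are called regulous. For $l\in\mathbb N$: consider compositions $\pi:M\to\mathbb R^2$ of successive blowings-up $M_i\to M_{i-1}$ ($M_0=\mathbb R^2$), each centred at points. An infinitely near point of order $j$ is a sequence $a_0\in M_0,\dots,a_j\in M_j$ where $M_i$ is the blowing-up of $M_{i-1}$ at $a_{i-1}$ and $a_i$ maps to $a_{i-1}$; the number of stages of $\pi$ is the maximal order of infinitely near points in $M$. $\mathcal R^k_{[l]}(\mathbb R^2)$ is the set of $f\in\mathcal R^k(\mathbb R^2)$ for which there is such a $\pi$ with at most $l$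 stages such that $f\circ\pi$ is regular on $M$. A polynomial $p\in\mathbb R[x,y]$ is locally positive definite at $a=(a_1,a_2)$ if, writing $p=\sum_{i\ge m}p_i$ with $p_i$ homogeneous of degree $i$ in the variables $(x-a_1,y-a_2)$ and $p_m\neq 0$, the lowest component $p_m$ is positive at every point of $\mathbb R^2$ other than $a$ (when $p(a)\ne 0$ this means $p(a)>0$). *)

theory Defs
  imports "HOL-Analysis.Analysis" "HOL-Computational_Algebra.Polynomial_Factorial"
begin

text \<open>Bivariate real polynomials R[x,y] are represented as real poly poly:
  the outer variable is y, the coefficients are polynomials in x.
  Points of R^2 are pairs (x,y).\<close>

definition peval :: "real poly poly \<Rightarrow> real \<times> real \<Rightarrow> real" where
  "peval P z = poly (poly P [:snd z:]) (fst z)"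

definition zariski_open :: "(real \<times> real) set \<Rightarrow> bool" where
  "zariski_open U \<longleftrightarrow> (\<exists>S. U = {z. \<exists>P\<in>S. peval P z \<noteq> 0})"

definition regulous :: "(real \<times> real \<Rightarrow> real) \<Rightarrow> bool" where
  "regulous f \<longleftrightarrow> continuous_on UNIV f \<and>
     (\<exists>U P Q. zariski_open U \<and> U \<noteq> {} \<and>
        (\<forall>z\<in>U. peval Q z \<noteq> 0 \<and> f z = peval P z / peval Q z))"

definition rat_regular_at :: "(real \<times> real \<Rightarrow> real) \<Rightarrow> real \<times> real \<Rightarrow> bool" where
  "rat_regular_at f z \<longleftrightarrow> (\<exists>P Q U. zariski_open U \<and> U \<noteq> {} \<and> peval Q z \<noteq> 0 \<and>
      (\<forall>w\<in>U. peval Q w \<noteq> 0 \<and> f w = peval P w / peval Q w))"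

text \<open>dom(f): the largest Zariski open set on which the rational function of f is regular
  (= the set of points at which it is regular); pol(f) its complement.\<close>
definition rdom :: "(real \<times> real \<Rightarrow> real) \<Rightarrow> (real \<times> real) set" where
  "rdom f = {z. rat_regular_at f z}"

definition pol :: "(real \<times> real \<Rightarrow> real) \<Rightarrow> (real \<times> real) set" where
  "pol f = UNIV - rdom f"

definition regular_at :: "(real \<times> real \<Rightarrow> real) \<Rightarrow> real \<times> real \<Rightarrow> bool" where
  "regular_at g z \<longleftrightarrow> (\<exists>P Q. peval Q z \<noteq> 0 \<and>
      (\<forall>w. peval Q w \<noteq> 0 \<longrightarrow> g w = peval P w / peval Q w))"

text \<open>The two standard affine charts of the blowing-up of R^2 at a point a;
  the exceptional divisor is u = 0 in the first chart and v = 0 in the second.\<close>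
definition chart1 :: "real \<times> real \<Rightarrow> real \<times> real \<Rightarrow> real \<times> real" where
  "chart1 a w = (fst a + fst w, snd a + fst w * snd w)"

definition chart2 :: "real \<times> real \<Rightarrow> real \<times> real \<Rightarrow> real \<times> real" where
  "chart2 a w = (fst a + fst w * snd w, snd a + snd w)"

text \<open>A composition of blowings-up with at most one stage is the blowing-up
  of R^2 at a finite set S of points of R^2. f o pi is regular on M iff it is
  regular at every point of M, i.e. f is regular at points outside S and
  f o chart is regular at every point of each exceptional divisor.\<close>
definition regular_after_blowup :: "(real \<times> real) set \<Rightarrow> (real \<times> real \<Rightarrow> real) \<Rightarrow> bool" where
  "regular_after_blowup S f \<longleftrightarrow> finite S \<and>
     (\<forall>z. z \<notin> S \<longrightarrow> regular_at f z) \<and>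
     (\<forall>a\<in>S. (\<forall>v. regular_at (f \<circ> chart1 a) (0, v)) \<and>
             (\<forall>u. regular_at (f \<circ> chart2 a) (u, 0)))"

definition R0_1 :: "(real \<times> real \<Rightarrow> real) set" where
  "R0_1 = {f. regulous f \<and> (\<exists>S. regular_after_blowup S f)}"

text \<open>Translation: shift P a (u,v) = P(a1+u, a2+v).\<close>
definition shift :: "real poly poly \<Rightarrow> real \<times> real \<Rightarrow> real poly poly" where
  "shift P a = pcompose (map_poly (\<lambda>c. pcompose c [:fst a, 1:]) P) [:[:snd a:], 1:]"

text \<open>Coefficient of (x-a1)^i (y-a2)^j.\<close>
definition tcoeff :: "real poly poly \<Rightarrow> real \<times> real \<Rightarrow> nat \<Rightarrow> nat \<Rightarrow> real" where
  "tcoeff P a i j = coeff (coeff (shift P a) j) i"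

definition homog_comp :: "real poly poly \<Rightarrow> real \<times> real \<Rightarrow> nat \<Rightarrow> real \<times> real \<Rightarrow> real" where
  "homog_comp P a m w =
     (\<Sum>i\<le>m. tcoeff P a i (m - i) * (fst w - fst a) ^ i * (snd w - snd a) ^ (m - i))"

definition loc_pos_def :: "real poly poly \<Rightarrow> real \<times> real \<Rightarrow> bool" where
  "loc_pos_def P a \<longleftrightarrow> (\<exists>m. (\<exists>i\<le>m. tcoeff P a i (m - i) \<noteq> 0) \<and>
      (\<forall>k<m. \<forall>i\<le>k. tcoeff P a i (k - i) = 0) \<and>
      (\<forall>w. w \<noteq> a \<longrightarrow> homog_comp P a m w > 0))"

end

theory Submission
  imports Defs "HOL-Computational_Algebra.Field_as_Ring"
begin

text \<open>
  The identity
  f q = p holds everywhere by continuity, and coprimality forces dom(f) = {q \<noteq> 0};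
  hence pol(f) is the zero set of q, which is finite because coprime bivariate polynomials have finitely many
  common zeros (eliminate each variable by Bezout over the fraction field).
  A one-stage resolution must therefore blow up every point a of pol(f), and f is regular
  away from pol(f). If q has order m at a, then in the first chart (u,v) \<mapsto> a + (u,uv)
  the pullback of q is u^m times its strict transform, which restricts on the exceptional
  divisor u = 0 to the initial form of q on the line x - a1 = 1; the order of p at a is at
  least m. So f o chart1 is the quotient of the strict transforms and is regular wherever
  the strict transform of q is nonzero; conversely a zero of it would produce a prime
  factor common to the pullbacks of p and q other than the divisor, which coprimality
  excludes. The second chart follows by swapping the variables. Thus f is regular after
  blowing up a iff the initial form of q vanishes nowhere off a, and for the nonnegative
  polynomial q this is exactly local positive definiteness at a.
\<close>

lemma poly_poly_eval: "poly (poly R s) u = poly (map_poly (\<lambda>c. poly c u) R) (poly s u)"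
  by (induction R) (auto simp: map_poly_pCons)

lemma peval_in_y: "peval P (x,y) = poly (map_poly (\<lambda>c. poly c x) P) y"
  unfolding peval_def using poly_poly_eval[of P "[:y:]" x] by simp

lemma peval_add [simp]: "peval (A + B) z = peval A z + peval B z"
  and peval_diff [simp]: "peval (A - B) z = peval A z - peval B z"
  and peval_mult [simp]: "peval (A * B) z = peval A z * peval B z"
  and peval_0 [simp]: "peval 0 z = 0"
  and peval_1 [simp]: "peval 1 z = 1"
  and peval_const [simp]: "peval [:c:] z = poly c (fst z)"
  and peval_monom [simp]: "peval (monom c j) z = poly c (fst z) * snd z ^ j"
  and peval_smult [simp]: "peval (smult c A) z = poly c (fst z) * peval A z"
  by (simp_all add: peval_def poly_monom)

lemma peval_power [simp]: "peval (A ^ n) z = peval A z ^ n"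
  by (induction n) auto

lemma peval_sum [simp]: "peval (sum F S) z = (\<Sum>i\<in>S. peval (F i) z)"
  by (induction S rule: infinite_finite_induct) auto

lemma peval_pcompose: "peval (pcompose R S) (x,y) = peval R (x, peval S (x,y))"
  unfolding peval_def by (simp add: poly_pcompose poly_poly_eval)

lemma poly_as_sum_below:
  assumes "degree (p::real poly) < N"
  shows "poly p x = (\<Sum>i<N. coeff p i * x ^ i)"
proof -
  have "poly p x = (\<Sum>i\<le>degree p. coeff p i * x ^ i)" by (simp add: poly_altdef)
  also have "\<dots> = (\<Sum>i<N. coeff p i * x ^ i)"
    by (rule sum.mono_neutral_cong_left) (use assms in \<open>auto simp: coeff_eq_0\<close>)
  finally show ?thesis .
qed

definition coeff_bound :: "real poly poly \<Rightarrow> nat" where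
  "coeff_bound P = degree P + (\<Sum>j\<le>degree P. degree (coeff P j))"

lemma coeff_beyond_bound: "coeff_bound P < i \<or> coeff_bound P < j \<Longrightarrow> coeff (coeff P j) i = 0"
proof (cases "j \<le> degree P")
  case True
  assume a: "coeff_bound P < i \<or> coeff_bound P < j"
  have "degree (coeff P j) \<le> (\<Sum>j\<le>degree P. degree (coeff P j))"
    by (rule member_le_sum) (use True in auto)
  then have "degree (coeff P j) < i" using a True unfolding coeff_bound_def by auto
  then show ?thesis by (simp add: coeff_eq_0)
qed (simp add: coeff_eq_0)

lemma peval_expand:
  assumes "coeff_bound P < N"
  shows "peval P (x,y) = (\<Sum>i<N. \<Sum>j<N. coeff (coeff P j) i * x ^ i * y ^ j)"
proof -
  have coeff_deg: "degree (coeff P j) < N" for j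
  proof (rule ccontr)
    assume "\<not> degree (coeff P j) < N"
    then have "coeff (coeff P j) (degree (coeff P j)) = 0"
      using assms by (intro coeff_beyond_bound) auto
    then show False using \<open>\<not> degree (coeff P j) < N\<close> assms by simp
  qed
  have "degree (map_poly (\<lambda>c. poly c x) P) < N"
    using map_poly_degree_leq[of "\<lambda>c. poly c x" P] assms unfolding coeff_bound_def by linarith
  then have "peval P (x,y) = (\<Sum>j<N. poly (coeff P j) x * y ^ j)"
    unfolding peval_in_y by (subst poly_as_sum_below) (simp_all add: coeff_map_poly)
  also have "\<dots> = (\<Sum>j<N. \<Sum>i<N. coeff (coeff P j) i * x ^ i * y ^ j)"
    by (intro sum.cong refl) (simp add: poly_as_sum_below[OF coeff_deg] sum_distrib_right)
  also have "\<dots> = (\<Sum>i<N. \<Sum>j<N. coeff (coeff P j) i * x ^ i * y ^ j)"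
    by (rule sum.swap)
  finally show ?thesis .
qed

lemma peval_continuous: "continuous_on S (peval P)"
proof -
  let ?N = "Suc (coeff_bound P)"
  have "peval P = (\<lambda>z. \<Sum>i<?N. \<Sum>j<?N. coeff (coeff P j) i * fst z ^ i * snd z ^ j)"
    using peval_expand[of P ?N] by (auto simp: fun_eq_iff)
  then show ?thesis by (simp add: continuous_intros)
qed

lemma isCont_peval: "isCont (peval P) z"
  using peval_continuous continuous_on_eq_continuous_at by blast

lemma isCont_peval_in_x: "isCont (\<lambda>u. peval P (u, v)) x"
  by (rule isCont_o2[OF _ isCont_peval]) (intro continuous_intros)

lemma open_nonzero_set: "open {z. peval P z \<noteq> 0}"
  using continuous_open_preimage[OF peval_continuous[of UNIV P] open_UNIV, of "-{0}"]
  by (auto simp: vimage_def)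

text \<open>Cut out a square around a point and use that a univariate polynomial with
  infinitely many roots vanishes, first in y and then in x.\<close>
lemma peval_zero_on_open:
  assumes "open W" "w0 \<in> W" and vanish: "\<forall>z\<in>W. peval P z = 0"
  shows "P = 0"
proof -
  obtain e where e: "e > 0" "ball w0 e \<subseteq> W" using assms open_contains_ball by blast
  obtain x0 y0 where w0: "w0 = (x0,y0)" by (cases w0)
  define I where "I c = {c - e/2<..<c + e/2}" for c :: real
  have I_infinite: "infinite (I c)" for c using e by (simp add: I_def)
  have square: "(x,y) \<in> W" if "x \<in> I x0" "y \<in> I y0" for x y
  proof -
    have "dist (x0,y0) (x,y) \<le> \<bar>x0 - x\<bar> + \<bar>y0 - y\<bar>"
      unfolding dist_Pair_Pair dist_real_def using sqrt_sum_squares_le_sum_abs[of "x0-x" "y0-y"] by simp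
    also have "\<dots> < e" using that by (auto simp: I_def abs_if)
    finally show ?thesis using e w0 by auto
  qed
  have coeffs_vanish: "poly (coeff P j) x = 0" if "x \<in> I x0" for x j
  proof -
    let ?R = "map_poly (\<lambda>c. poly c x) P"
    have "I y0 \<subseteq> {y. poly ?R y = 0}"
    proof
      fix y assume "y \<in> I y0"
      then have "peval P (x,y) = 0" using square[OF that] vanish by blast
      then show "y \<in> {y. poly ?R y = 0}" by (simp add: peval_in_y)
    qed
    then have "?R = 0" using I_infinite poly_roots_finite finite_subset by blast
    then show ?thesis by (metis coeff_0 coeff_map_poly poly_0)
  qed
  show ?thesis
  proof (rule poly_eqI)
    fix j
    have "I x0 \<subseteq> {x. poly (coeff P j) x = 0}" using coeffs_vanish by blast
    then show "coeff P j = coeff 0 j" using I_infinite poly_roots_finite finite_subset by fastforce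
  qed
qed

text \<open>Two polynomials agreeing wherever a nonzero polynomial R does not vanish are equal
  (the nonvanishing set of R is open and nonempty).\<close>
lemma peval_eq_off_zeros:
  assumes "R \<noteq> 0" and eq: "\<And>z. peval R z \<noteq> 0 \<Longrightarrow> peval A z = peval B z"
  shows "A = B"
proof -
  have "\<exists>z0. peval R z0 \<noteq> 0"
    using peval_zero_on_open[of UNIV _ R] \<open>R \<noteq> 0\<close> by auto
  then obtain z0 where "peval R z0 \<noteq> 0" by blast
  then have "A - B = 0"
    using eq by (intro peval_zero_on_open[OF open_nonzero_set, of z0]) auto
  then show ?thesis by simp
qed

lemma peval_inject: "(\<And>z. peval A z = peval B z) \<Longrightarrow> A = B"
  by (rule peval_eq_off_zeros[of 1]) auto

lemma exists_nonzero_value: "P \<noteq> 0 \<Longrightarrow> \<exists>z. peval P z \<noteq> 0"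
  using peval_inject[of P 0] by auto

lemma unit_peval_nonzero: "is_unit (A::real poly poly) \<Longrightarrow> peval A z \<noteq> 0"
  by (metis dvdE mult_eq_0_iff one_neq_zero peval_1 peval_mult)

lemma continuous_zero_off_zeros:
  assumes g: "continuous_on UNIV g" and "P \<noteq> 0"
    and vanish: "\<forall>z. peval P z \<noteq> 0 \<longrightarrow> g z = (0::real)"
  shows "g w = 0"
proof (rule ccontr)
  assume "g w \<noteq> 0"
  have "open {z. g z \<noteq> 0}"
    using continuous_open_preimage[OF g open_UNIV, of "-{0}"] by (auto simp: vimage_def)
  then have "\<exists>z\<in>{z. g z \<noteq> 0}. peval P z \<noteq> 0"
    using peval_zero_on_open[of "{z. g z \<noteq> 0}" w P] \<open>P \<noteq> 0\<close> \<open>g w \<noteq> 0\<close> by auto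
  then show False using vanish by auto
qed

section \<open>Coordinate changes\<close>

definition swap_vars :: "real poly poly \<Rightarrow> real poly poly" where
  "swap_vars P = (\<Sum>i\<le>coeff_bound P. monom (\<Sum>j\<le>coeff_bound P. monom (coeff (coeff P j) i) j) i)"

lemma coeff_swap_vars: "coeff (coeff (swap_vars P) j) i = coeff (coeff P i) j"
proof -
  have "coeff (coeff (swap_vars P) j) i =
    (if j \<le> coeff_bound P \<and> i \<le> coeff_bound P then coeff (coeff P i) j else 0)"
    unfolding swap_vars_def by (simp add: coeff_sum coeff_monom)
  then show ?thesis using coeff_beyond_bound[of P j i] by auto
qed

lemma peval_swap_vars: "peval (swap_vars P) z = peval P (prod.swap z)"
proof -
  obtain x y where z: "z = (x,y)" by (cases z)
  have "peval (swap_vars P) z = (\<Sum>i<Suc (coeff_bound P). \<Sum>j<Suc (coeff_bound P). coeff (coeff P j) i * y ^ i * x ^ j)"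
    by (simp add: swap_vars_def z lessThan_Suc_atMost poly_sum poly_monom sum_distrib_left mult_ac)
  also have "\<dots> = peval P (y,x)" by (rule peval_expand[symmetric]) simp
  finally show ?thesis by (simp add: z)
qed

lemma swap_vars_mult: "swap_vars (A * B) = swap_vars A * swap_vars B"
  and swap_vars_1: "swap_vars 1 = 1"
  and swap_vars_swap_vars: "swap_vars (swap_vars A) = A"
  by (rule peval_inject; simp add: peval_swap_vars)+

lemma peval_shift: "peval (shift P a) (u,v) = peval P (fst a + u, snd a + v)"
proof -
  have "peval (shift P a) (u,v) = peval (map_poly (\<lambda>c. pcompose c [:fst a, 1:]) P) (u, snd a + v)"
    unfolding shift_def peval_pcompose by (simp add: peval_def)
  also have "\<dots> = poly (map_poly (\<lambda>c. poly c u) (map_poly (\<lambda>c. pcompose c [:fst a, 1:]) P)) (snd a + v)"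
    by (rule peval_in_y)
  also have "map_poly (\<lambda>c. poly c u) (map_poly (\<lambda>c. pcompose c [:fst a, 1:]) P)
     = map_poly (\<lambda>c. poly c (fst a + u)) P"
    by (subst map_poly_map_poly) (auto simp: o_def poly_pcompose add.commute)
  finally show ?thesis by (simp add: peval_in_y)
qed

lemma shift_mult: "shift (A * B) a = shift A a * shift B a"
  and shift_1: "shift 1 a = 1"
  and shift_shift: "shift (shift A a) (- a) = A"
  and shift_shift': "shift (shift A (- a)) a = A"
  by (rule peval_inject; auto simp: peval_shift)+

lemma coprime_automorphism:
  fixes \<phi> \<psi> :: "real poly poly \<Rightarrow> real poly poly"
  assumes mult: "\<And>A B. \<phi> (A * B) = \<phi> A * \<phi> B" "\<And>A B. \<psi> (A * B) = \<psi> A * \<psi> B"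
    and inverse: "\<And>A. \<psi> (\<phi> A) = A" "\<And>A. \<phi> (\<psi> A) = A" and one: "\<phi> 1 = 1"
    and cop: "coprime p q"
  shows "coprime (\<phi> p) (\<phi> q)"
proof (rule coprimeI)
  fix d assume d: "d dvd \<phi> p" "d dvd \<phi> q"
  have dvd_back: "\<psi> d dvd A" if "d dvd \<phi> A" for A
  proof -
    from that obtain k where "\<phi> A = d * k" by blast
    then have "\<psi> (\<phi> A) = \<psi> d * \<psi> k" by (simp add: mult(2))
    then show ?thesis using inverse(1) by (metis dvd_triv_left)
  qed
  have "is_unit (\<psi> d)" using coprime_common_divisor[OF cop dvd_back[OF d(1)] dvd_back[OF d(2)]] .
  then obtain w where "\<psi> d * w = 1" by (metis dvd_def)
  then have "\<phi> (\<psi> d) * \<phi> w = 1" using mult(1) one by metis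
  then show "is_unit d" using inverse(2) by (metis dvd_triv_left)
qed

lemma coprime_shift: "coprime p q \<Longrightarrow> coprime (shift p a) (shift q a)"
  by (rule coprime_automorphism[where \<psi>="\<lambda>A. shift A (-a)"])
     (auto simp: shift_mult shift_1 shift_shift shift_shift')

lemma coprime_swap_vars: "coprime p q \<Longrightarrow> coprime (swap_vars p) (swap_vars q)"
  by (rule coprime_automorphism[where \<psi>=swap_vars])
     (auto simp: swap_vars_mult swap_vars_swap_vars swap_vars_1)

definition Xvar :: "real poly poly" where "Xvar = [:[:0,1:]:]"

lemma peval_Xvar [simp]: "peval Xvar z = fst z"
  by (simp add: Xvar_def)

lemma Xvar_nonzero: "Xvar \<noteq> 0"
  by (simp add: Xvar_def)

lemma Xvar_dvd_iff: "Xvar dvd A \<longleftrightarrow> (\<forall>y. peval A (0,y) = 0)"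
proof
  assume "\<forall>y. peval A (0,y) = 0"
  then have "map_poly (\<lambda>c. poly c 0) A = 0"
    using poly_all_0_iff_0 by (metis peval_in_y)
  then have "\<forall>n. poly (coeff A n) 0 = 0"
    by (metis coeff_0 coeff_map_poly poly_0)
  then have "\<forall>n. [:0,1:] dvd coeff A n"
    by (metis poly_eq_0_iff_dvd minus_zero)
  then show "Xvar dvd A" unfolding Xvar_def by (simp add: const_poly_dvd_iff)
qed auto

lemma Xvar_prime: "prime_elem Xvar"
proof (rule prime_elemI)
  show "\<not> is_unit Xvar" using unit_peval_nonzero[of Xvar "(0,0)"] by auto
  fix A B assume "Xvar dvd A * B"
  then have "\<forall>y. peval A (0,y) * peval B (0,y) = 0" by (simp add: Xvar_dvd_iff)
  then have "map_poly (\<lambda>c. poly c 0) A * map_poly (\<lambda>c. poly c 0) B = 0"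
    using poly_all_0_iff_0 by (metis peval_in_y poly_mult)
  then show "Xvar dvd A \<or> Xvar dvd B" by (auto simp: Xvar_dvd_iff peval_in_y)
qed (rule Xvar_nonzero)

lemma peval_eq_off_axis:
  "(\<And>x y. x \<noteq> 0 \<Longrightarrow> peval A (x,y) = peval B (x,y)) \<Longrightarrow> A = B"
  by (rule peval_eq_off_zeros[OF Xvar_nonzero]) auto

text \<open>A nonzero polynomial vanishing at z has a prime factor vanishing at z
  (bivariate real polynomials form a factorial ring).\<close>
lemma prime_factor_vanishing:
  fixes A :: "real poly poly"
  assumes "A \<noteq> 0" "peval A z = 0"
  shows "\<exists>g. prime_elem g \<and> g dvd A \<and> peval g z = 0"
  using assms
proof (induction A rule: prime_divisors_induct)
  case (unit x) then show ?case using unit_peval_nonzero by blast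
next
  case (factor p x)
  show ?case
  proof (cases "peval p z = 0")
    case True then show ?thesis using factor by (intro exI[of _ p]) auto
  next
    case False
    then have "peval x z = 0" "x \<noteq> 0" using factor by auto
    then obtain g where "prime_elem g" "g dvd x" "peval g z = 0" using factor by blast
    then show ?thesis by (intro exI[of _ g]) auto
  qed
qed simp

section \<open>Reduced representations of regulous functions\<close>

lemma zariski_open_basic: "zariski_open {z. peval P z \<noteq> 0}"
  unfolding zariski_open_def by (rule exI[of _ "{P}"]) auto

lemma zariski_open_contains_basic:
  assumes "zariski_open U" "U \<noteq> {}"
  obtains P where "P \<noteq> 0" "{z. peval P z \<noteq> 0} \<subseteq> U"
proof -
  obtain S where U: "U = {z. \<exists>P\<in>S. peval P z \<noteq> 0}" using assms(1) unfolding zariski_open_def by blast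
  obtain z where "z \<in> U" using assms(2) by blast
  then obtain P where "P \<in> S" "peval P z \<noteq> 0" using U by blast
  moreover have "{z. peval P z \<noteq> 0} \<subseteq> U" using U \<open>P \<in> S\<close> by blast
  moreover have "P \<noteq> 0" using \<open>peval P z \<noteq> 0\<close> by auto
  ultimately show ?thesis using that by blast
qed

lemma regular_at_imp_rdom:
  assumes "regular_at f z"
  shows "z \<in> rdom f"
proof -
  obtain P Q where PQ: "peval Q z \<noteq> 0" "\<forall>w. peval Q w \<noteq> 0 \<longrightarrow> f w = peval P w / peval Q w"
    using assms unfolding regular_at_def by blast
  then have "{w. peval Q w \<noteq> 0} \<noteq> {}" by blast
  with PQ zariski_open_basic[of Q] show ?thesis
    unfolding rdom_def rat_regular_at_def mem_Collect_eq by blast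
qed

definition reduced_rep :: "(real \<times> real \<Rightarrow> real) \<Rightarrow> real poly poly \<Rightarrow> real poly poly \<Rightarrow> bool" where
  "reduced_rep f p q \<longleftrightarrow> regulous f \<and> coprime p q \<and> (\<forall>z. peval q z \<ge> 0) \<and>
     (\<forall>z\<in>rdom f. peval q z \<noteq> 0) \<and> (\<forall>z\<in>rdom f. f z = peval p z / peval q z)"

lemma regulous_rdom_contains_basic:
  assumes "regulous f"
  obtains P where "P \<noteq> 0" "\<forall>z. peval P z \<noteq> 0 \<longrightarrow> z \<in> rdom f"
proof -
  from assms obtain U P Q where U: "zariski_open U" "U \<noteq> {}"
    "\<forall>z\<in>U. peval Q z \<noteq> 0 \<and> f z = peval P z / peval Q z" unfolding regulous_def by blast
  have "z \<in> rdom f" if "z \<in> U" for z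
    unfolding rdom_def rat_regular_at_def using U that by blast
  moreover obtain P0 where "P0 \<noteq> 0" "{z. peval P0 z \<noteq> 0} \<subseteq> U"
    using zariski_open_contains_basic[OF U(1,2)] by blast
  ultimately show ?thesis using that by blast
qed

lemma reduced_rep_q_nonzero:
  assumes H: "reduced_rep f p q"
  shows "q \<noteq> 0"
proof -
  obtain P0 where "P0 \<noteq> 0" "\<forall>z. peval P0 z \<noteq> 0 \<longrightarrow> z \<in> rdom f"
    using H unfolding reduced_rep_def by (metis regulous_rdom_contains_basic)
  then obtain z where "z \<in> rdom f" using exists_nonzero_value by blast
  then show ?thesis using H unfolding reduced_rep_def by auto
qed

text \<open>By continuity of f the identity f q = p holds everywhere, not only on dom(f).\<close>
lemma reduced_rep_times_q:
  assumes H: "reduced_rep f p q"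
  shows "f z * peval q z = peval p z"
proof -
  from H have "regulous f" unfolding reduced_rep_def by blast
  then obtain P0 where P0: "P0 \<noteq> 0" "\<forall>z. peval P0 z \<noteq> 0 \<longrightarrow> z \<in> rdom f"
    by (rule regulous_rdom_contains_basic)
  have "continuous_on UNIV (\<lambda>z. f z * peval q z - peval p z)"
    using H unfolding reduced_rep_def regulous_def by (intro continuous_intros peval_continuous) auto
  moreover have "\<forall>z. peval P0 z \<noteq> 0 \<longrightarrow> f z * peval q z - peval p z = 0"
    using P0(2) H unfolding reduced_rep_def by auto
  ultimately have "f z * peval q z - peval p z = 0" by (rule continuous_zero_off_zeros[OF _ P0(1)])
  then show ?thesis by simp
qed

text \<open>The part of the hypotheses that survives pulling back along the charts and swapping
  the variables: f is continuous and f q = p everywhere, with p and q coprime.\<close>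
definition continuous_quotient :: "(real \<times> real \<Rightarrow> real) \<Rightarrow> real poly poly \<Rightarrow> real poly poly \<Rightarrow> bool" where
  "continuous_quotient f p q \<longleftrightarrow>
     continuous_on UNIV f \<and> coprime p q \<and> (\<forall>z. f z * peval q z = peval p z)"

lemma reduced_rep_continuous_quotient: "reduced_rep f p q \<Longrightarrow> continuous_quotient f p q"
  unfolding continuous_quotient_def using reduced_rep_times_q
  by (auto simp: reduced_rep_def regulous_def)

lemma continuous_quotient_value:
  assumes "continuous_quotient f p q" "peval q z \<noteq> 0"
  shows "f z = peval p z / peval q z"
proof -
  have "f z * peval q z = peval p z" using assms(1) unfolding continuous_quotient_def by blast
  then show ?thesis using assms(2) by (simp add: field_simps)
qed

lemma continuous_quotient_regular_at:
  "continuous_quotient f p q \<Longrightarrow> peval q z \<noteq> 0 \<Longrightarrow> regular_at f z"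
  unfolding regular_at_def using continuous_quotient_value by blast

text \<open>Since p and q are coprime, the rational function is regular exactly where q does
  not vanish: any other representation P/Q satisfies p Q = P q, so q divides Q.\<close>
lemma reduced_rep_rdom_iff:
  assumes H: "reduced_rep f p q"
  shows "z \<in> rdom f \<longleftrightarrow> peval q z \<noteq> 0"
proof
  assume "peval q z \<noteq> 0"
  then show "z \<in> rdom f"
    using reduced_rep_continuous_quotient[OF H] continuous_quotient_regular_at regular_at_imp_rdom
    by blast
next
  assume "z \<in> rdom f"
  then obtain P Q U where U: "zariski_open U" "U \<noteq> {}" "peval Q z \<noteq> 0"
    "\<forall>w\<in>U. peval Q w \<noteq> 0 \<and> f w = peval P w / peval Q w"
    unfolding rdom_def rat_regular_at_def by blast
  obtain P1 where P1: "P1 \<noteq> 0" "{z. peval P1 z \<noteq> 0} \<subseteq> U"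
    using zariski_open_contains_basic[OF U(1,2)] by blast
  have "p * Q = P * q"
  proof (rule peval_eq_off_zeros[of "P1 * q"])
    show "P1 * q \<noteq> 0" using P1(1) reduced_rep_q_nonzero[OF H] by simp
    fix w assume "peval (P1 * q) w \<noteq> 0"
    then have w: "peval q w \<noteq> 0" "w \<in> U" using P1(2) by auto
    then have "peval Q w \<noteq> 0" "f w = peval P w / peval Q w" using U(4) by auto
    moreover have "f w = peval p w / peval q w"
      using continuous_quotient_value[OF reduced_rep_continuous_quotient[OF H] w(1)] .
    ultimately show "peval (p * Q) w = peval (P * q) w" using w(1) by (simp add: field_simps)
  qed
  moreover have "coprime q p" using H unfolding reduced_rep_def by (simp add: coprime_commute)
  ultimately have "q dvd Q" using coprime_dvd_mult_right_iff dvd_triv_right by metis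
  then obtain r where "Q = q * r" by blast
  then show "peval q z \<noteq> 0" using U(3) by auto
qed

lemma reduced_rep_pol: "reduced_rep f p q \<Longrightarrow> pol f = {z. peval q z = 0}"
  unfolding pol_def using reduced_rep_rdom_iff by blast

section \<open>Coprime polynomials have finitely many common zeros\<close>

lemma field_poly_bezout:
  fixes P Q :: "'k::field poly"
  shows "\<exists>A B. (A * P + B * Q) dvd P \<and> (A * P + B * Q) dvd Q"
proof (induction Q arbitrary: P rule: measure_induct_rule[where f="\<lambda>Q. if Q = 0 then 0 else Suc (degree Q)"])
  case (less Q)
  show ?case
  proof (cases "Q = 0")
    case True then show ?thesis by (intro exI[of _ 1] exI[of _ 0]) auto
  next
    case False
    define R where "R = P mod Q"
    have "(if R = 0 then 0 else Suc (degree R)) < (if Q = 0 then 0 else Suc (degree Q))"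
      using degree_mod_less[OF False, of P] False unfolding R_def by auto
    then obtain A B where AB: "(A * Q + B * R) dvd Q" "(A * Q + B * R) dvd R" using less by blast
    have PQ: "P = (P div Q) * Q + R" unfolding R_def by simp
    have eq: "A * Q + B * R = B * P + (A - B * (P div Q)) * Q"
      by (subst PQ) (simp add: algebra_simps)
    have "(A * Q + B * R) dvd P" using AB by (subst PQ) (simp add: dvd_add)
    then show ?thesis using AB eq by metis
  qed
qed

lemma clear_denominators:
  fixes X :: "real poly fract poly"
  obtains n X' where "n \<noteq> 0" "smult (to_fract n) X = map_poly to_fract X'"
proof -
  obtain k X0 where X: "X = smult k (map_poly to_fract X0)" by (rule content_decompose_fract)
  obtain a b where ab: "k = Fract a b" "b \<noteq> 0" by (cases k)
  have "smult (to_fract b) X = map_poly to_fract (smult a X0)"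
    using ab by (simp add: X Fract_conv_to_fract)
  then show ?thesis using ab(2) that by blast
qed

text \<open>Bezout's identity is applied in K(x)[y], where the greatest
  common divisor is a unit by Gauss's lemma, and the denominators are cleared.\<close>
lemma coprime_eliminate_y:
  fixes p q :: "real poly poly"
  assumes cop: "coprime p q"
  obtains A B c where "c \<noteq> 0" "A * p + B * q = [:c:]"
proof -
  let ?fp = "map_poly to_fract p" and ?fq = "map_poly to_fract q"
  obtain A B where AB: "(A * ?fp + B * ?fq) dvd ?fp" "(A * ?fp + B * ?fq) dvd ?fq"
    using field_poly_bezout by blast
  define d where "d = A * ?fp + B * ?fq"
  have "d \<noteq> 0"
  proof
    assume "d = 0"
    then have "p = 0" "q = 0" using AB unfolding d_def by auto
    then show False using cop by simp
  qed
  obtain k d' where dd: "d = smult k (map_poly to_fract d')" "content d' = 1"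
    by (rule content_decompose_fract)
  have k0: "k \<noteq> 0" using \<open>d \<noteq> 0\<close> dd by auto
  have fd: "map_poly to_fract d' dvd d" unfolding dd by (simp add: dvd_smult)
  have "d' dvd p" by (rule fract_poly_dvdD[OF _ dd(2)]) (use fd AB d_def dvd_trans in blast)
  moreover have "d' dvd q" by (rule fract_poly_dvdD[OF _ dd(2)]) (use fd AB d_def dvd_trans in blast)
  ultimately have "is_unit d'" using coprime_common_divisor[OF cop] by blast
  then have "is_unit (map_poly to_fract d')" by (rule fract_poly_is_unit)
  then have "is_unit d" unfolding dd using k0 by (simp add: is_unit_smult_iff dvd_field_iff)
  then obtain w where w: "1 = d * w" by blast
  obtain n1 X1 where X1: "n1 \<noteq> 0" "smult (to_fract n1) (w * A) = map_poly to_fract X1"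
    by (rule clear_denominators)
  obtain n2 X2 where X2: "n2 \<noteq> 0" "smult (to_fract n2) (w * B) = map_poly to_fract X2"
    by (rule clear_denominators)
  have "map_poly to_fract (smult n2 X1 * p + smult n1 X2 * q)
      = smult (to_fract n2) (smult (to_fract n1) (w * A)) * ?fp
        + smult (to_fract n1) (smult (to_fract n2) (w * B)) * ?fq"
    by (simp add: X1 X2)
  also have "\<dots> = smult (to_fract (n1 * n2)) (w * d)"
    unfolding d_def by (simp add: algebra_simps smult_add_right)
  also have "\<dots> = map_poly to_fract [:n1 * n2:]" using w by (simp add: mult.commute map_poly_pCons)
  finally have "smult n2 X1 * p + smult n1 X2 * q = [:n1 * n2:]" by (simp only: fract_poly_eq_iff)
  moreover have "n1 * n2 \<noteq> 0" using X1(1) X2(1) by simp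
  ultimately show ?thesis by (rule that[rotated])
qed

text \<open>Eliminating y and, after swapping the variables, x confines the common zeros to a
  product of two finite sets.\<close>
lemma coprime_common_zeros_finite:
  assumes cop: "coprime p q"
  shows "finite {z. peval p z = 0 \<and> peval q z = 0}"
proof -
  obtain A1 B1 c1 where c1: "c1 \<noteq> 0" "A1 * p + B1 * q = [:c1:]"
    by (rule coprime_eliminate_y[OF cop])
  obtain A2 B2 c2 where c2: "c2 \<noteq> 0" "A2 * swap_vars p + B2 * swap_vars q = [:c2:]"
    by (rule coprime_eliminate_y[OF coprime_swap_vars[OF cop]])
  have "{z. peval p z = 0 \<and> peval q z = 0} \<subseteq> {x. poly c1 x = 0} \<times> {y. poly c2 y = 0}"
  proof
    fix z assume "z \<in> {z. peval p z = 0 \<and> peval q z = 0}"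
    moreover obtain x y where z: "z = (x,y)" by (cases z)
    ultimately have zero: "peval p (x,y) = 0" "peval q (x,y) = 0" by auto
    have "peval (A1 * p + B1 * q) (x,y) = poly c1 x" using c1(2) by simp
    then have "poly c1 x = 0" using zero by simp
    moreover have "peval (A2 * swap_vars p + B2 * swap_vars q) (y,x) = poly c2 y" using c2(2) by simp
    then have "poly c2 y = 0" using zero by (simp add: peval_swap_vars)
    ultimately show "z \<in> {x. poly c1 x = 0} \<times> {y. poly c2 y = 0}" using z by simp
  qed
  moreover have "finite ({x. poly c1 x = 0} \<times> {y. poly c2 y = 0})"
    using poly_roots_finite[OF c1(1)] poly_roots_finite[OF c2(1)] by simp
  ultimately show ?thesis using finite_subset by blast
qed

lemma reduced_rep_zeros_finite:
  assumes H: "reduced_rep f p q"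
  shows "finite {z. peval q z = 0}"
proof -
  have "peval p z = 0" if "peval q z = 0" for z
    using reduced_rep_times_q[OF H, of z] that by simp
  then have "{z. peval q z = 0} = {z. peval p z = 0 \<and> peval q z = 0}" by blast
  then show ?thesis
    using coprime_common_zeros_finite H unfolding reduced_rep_def by simp
qed

section \<open>Taylor expansion at a point, order and initial form\<close>

definition taylor_bound :: "real poly poly \<Rightarrow> real \<times> real \<Rightarrow> nat" where
  "taylor_bound P a = Suc (coeff_bound (shift P a))"

lemma taylor_expansion:
  "peval P (fst a + s, snd a + t) =
     (\<Sum>i<taylor_bound P a. \<Sum>j<taylor_bound P a. tcoeff P a i j * s ^ i * t ^ j)"
proof -
  have "peval P (fst a + s, snd a + t) = peval (shift P a) (s, t)" by (simp add: peval_shift)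
  also have "\<dots> = (\<Sum>i<taylor_bound P a. \<Sum>j<taylor_bound P a. tcoeff P a i j * s ^ i * t ^ j)"
    unfolding tcoeff_def taylor_bound_def by (rule peval_expand) simp
  finally show ?thesis .
qed

lemma tcoeff_beyond_bound:
  "taylor_bound P a \<le> i \<or> taylor_bound P a \<le> j \<Longrightarrow> tcoeff P a i j = 0"
  unfolding tcoeff_def taylor_bound_def by (intro coeff_beyond_bound) auto

definition vanishes_below :: "real poly poly \<Rightarrow> real \<times> real \<Rightarrow> nat \<Rightarrow> bool" where
  "vanishes_below P a m \<longleftrightarrow> (\<forall>k<m. \<forall>i\<le>k. tcoeff P a i (k - i) = 0)"

definition is_order :: "real poly poly \<Rightarrow> real \<times> real \<Rightarrow> nat \<Rightarrow> bool" where
  "is_order P a m \<longleftrightarrow> vanishes_below P a m \<and> (\<exists>i\<le>m. tcoeff P a i (m - i) \<noteq> 0)"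

lemma loc_pos_def_iff_order:
  "loc_pos_def P a \<longleftrightarrow> (\<exists>m. is_order P a m \<and> (\<forall>w. w \<noteq> a \<longrightarrow> homog_comp P a m w > 0))"
  unfolding loc_pos_def_def is_order_def vanishes_below_def by blast

lemma order_unique:
  assumes "is_order P a m" "is_order P a m'"
  shows "m = m'"
proof -
  have "\<not> k < l" if "is_order P a k" "is_order P a l" for k l
    using that unfolding is_order_def vanishes_below_def by blast
  then show ?thesis using assms by (meson linorder_neqE_nat)
qed

text \<open>A nonzero polynomial has an order at every point: the least degree of a nonzero
  Taylor coefficient.\<close>
lemma order_exists:
  assumes "P \<noteq> 0"
  obtains m where "is_order P a m"
proof -
  let ?nz = "\<lambda>r. \<exists>i\<le>r. tcoeff P a i (r - i) \<noteq> 0"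
  have "\<exists>r. ?nz r"
  proof (rule ccontr)
    assume "\<not> (\<exists>r. ?nz r)"
    then have "tcoeff P a i j = 0" for i j
      using spec[of _ "i + j"] by (metis add_diff_cancel_left' le_add1)
    then have "peval P (fst a + (fst z - fst a), snd a + (snd z - snd a)) = 0" for z
      by (simp only: taylor_expansion) simp
    then have "P = 0" by (intro peval_inject) simp
    then show False using assms by simp
  qed
  define m where "m = (LEAST r. ?nz r)"
  have "?nz m" unfolding m_def by (rule LeastI_ex) fact
  moreover have "vanishes_below P a m"
    unfolding vanishes_below_def m_def using not_less_Least[of _ ?nz] by blast
  ultimately show ?thesis using that unfolding is_order_def by blast
qed

text \<open>The initial form is homogeneous of degree m in (x - a1, y - a2); hence it vanishes
  nowhere off a iff it vanishes nowhere on the two affine lines x - a1 = 1 and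
  y - a2 = 1 (its dehomogenisations in the two charts of the blowing-up).\<close>
lemma homog_comp_scale:
  "homog_comp P a m (fst a + c * s, snd a + c * t) = c ^ m * homog_comp P a m (fst a + s, snd a + t)"
proof -
  have "c ^ i * c ^ (m - i) = c ^ m" if "i \<le> m" for i
    using that by (simp add: power_add[symmetric])
  then show ?thesis unfolding homog_comp_def
    by (auto simp: sum_distrib_left power_mult_distrib mult_ac intro!: sum.cong)
qed

lemma homog_comp_nonzero_iff_lines:
  "(\<forall>w. w \<noteq> a \<longrightarrow> homog_comp P a m w \<noteq> 0) \<longleftrightarrow>
     (\<forall>v. homog_comp P a m (fst a + 1, snd a + v) \<noteq> 0) \<and>
     (\<forall>u. homog_comp P a m (fst a + u, snd a + 1) \<noteq> 0)"
proof (intro iffI allI impI; (elim conjE)?)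
  assume line1: "\<forall>v. homog_comp P a m (fst a + 1, snd a + v) \<noteq> 0"
    and line2: "\<forall>u. homog_comp P a m (fst a + u, snd a + 1) \<noteq> 0"
  fix w assume "w \<noteq> a"
  define s t where "s = fst w - fst a" and "t = snd w - snd a"
  show "homog_comp P a m w \<noteq> 0"
  proof (cases "s = 0")
    case False
    then have "w = (fst a + s * 1, snd a + s * (t / s))" by (simp add: s_def t_def)
    then have "homog_comp P a m w = s ^ m * homog_comp P a m (fst a + 1, snd a + t / s)"
      by (simp only: homog_comp_scale)
    then show ?thesis using False line1 by simp
  next
    case True
    then have "t \<noteq> 0" using \<open>w \<noteq> a\<close> by (auto simp: s_def t_def prod_eq_iff)
    have "w = (fst a + t * 0, snd a + t * 1)" using True by (simp add: s_def t_def prod_eq_iff)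
    then have "homog_comp P a m w = t ^ m * homog_comp P a m (fst a + 0, snd a + 1)"
      by (simp only: homog_comp_scale)
    then show ?thesis using \<open>t \<noteq> 0\<close> line2[rule_format, of 0] by simp
  qed
qed (simp add: prod_eq_iff)

lemma initial_form_line_nonzero:
  assumes "\<exists>i\<le>m. tcoeff P a i (m - i) \<noteq> 0"
  obtains v where "homog_comp P a m (fst a + 1, snd a + v) \<noteq> 0"
proof -
  let ?R = "\<Sum>i\<le>m. monom (tcoeff P a i (m - i)) (m - i)"
  obtain i where i: "i \<le> m" "tcoeff P a i (m - i) \<noteq> 0" using assms by blast
  have "coeff ?R (m - i) = (\<Sum>j\<le>m. if m - j = m - i then tcoeff P a j (m - j) else 0)"
    by (simp add: coeff_sum coeff_monom)
  also have "\<dots> = (\<Sum>j\<le>m. if j = i then tcoeff P a j (m - j) else 0)"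
    using i(1) by (intro sum.cong) auto
  finally have "coeff ?R (m - i) \<noteq> 0" using i by simp
  then have "?R \<noteq> 0" by auto
  then obtain v where "poly ?R v \<noteq> 0" using poly_all_0_iff_0 by blast
  moreover have "poly ?R v = homog_comp P a m (fst a + 1, snd a + v)"
    by (simp add: homog_comp_def poly_sum poly_monom)
  ultimately show ?thesis using that by simp
qed

lemma shift_swap_vars: "shift (swap_vars P) (prod.swap a) = swap_vars (shift P a)"
  by (rule peval_inject) (auto simp: peval_shift peval_swap_vars)

lemma tcoeff_swap_vars: "tcoeff (swap_vars P) (prod.swap a) i j = tcoeff P a j i"
  unfolding tcoeff_def shift_swap_vars coeff_swap_vars ..

lemma homog_comp_swap_vars:
  "homog_comp (swap_vars P) (prod.swap a) m (prod.swap w) = homog_comp P a m w"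
proof -
  have "homog_comp (swap_vars P) (prod.swap a) m (prod.swap w) =
    (\<Sum>i\<le>m. tcoeff P a (m - i) i * (snd w - snd a) ^ i * (fst w - fst a) ^ (m - i))"
    unfolding homog_comp_def by (simp add: tcoeff_swap_vars)
  also have "\<dots> = homog_comp P a m w"
    unfolding homog_comp_def
    by (rule sum.reindex_bij_witness[where i="\<lambda>i. m - i" and j="\<lambda>i. m - i"]) (auto simp: mult_ac)
  finally show ?thesis .
qed

lemma vanishes_below_swap_vars:
  "vanishes_below P a m \<Longrightarrow> vanishes_below (swap_vars P) (prod.swap a) m"
  unfolding vanishes_below_def tcoeff_swap_vars
  by (metis diff_diff_cancel diff_le_self)

lemma is_order_swap_vars: "is_order P a m \<Longrightarrow> is_order (swap_vars P) (prod.swap a) m"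
  unfolding is_order_def using vanishes_below_swap_vars
  by (metis diff_diff_cancel diff_le_self tcoeff_swap_vars)

section \<open>The first chart of the blowing-up\<close>

text \<open>The pullback of P under the first chart (u,v) \<mapsto> a + (u, uv), and its strict
  transform: if P has order at least m at a, the pullback is u^m times the strict
  transform, whose restriction to the exceptional divisor u = 0 is the initial form of
  degree m on the line x - a1 = 1.\<close>
definition chart_pullback :: "real \<times> real \<Rightarrow> real poly poly \<Rightarrow> real poly poly" where
  "chart_pullback a P = pcompose (shift P a) [:0, [:0,1:]:]"

definition strict_transform :: "real poly poly \<Rightarrow> real \<times> real \<Rightarrow> nat \<Rightarrow> real poly poly" where
  "strict_transform P a m = (\<Sum>i<taylor_bound P a. \<Sum>j<taylor_bound P a.
     monom (monom (if m \<le> i + j then tcoeff P a i j else 0) (i + j - m)) j)"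

lemma peval_chart_pullback: "peval (chart_pullback a P) w = peval P (chart1 a w)"
proof -
  obtain u v where w: "w = (u,v)" by (cases w)
  have "peval [:0, [:0,1:]:] (u,v) = u * v" by (simp add: peval_def)
  then show ?thesis unfolding chart_pullback_def w by (simp add: peval_pcompose peval_shift chart1_def)
qed

lemma chart_pullback_factor:
  assumes low: "vanishes_below P a m"
  shows "chart_pullback a P = Xvar ^ m * strict_transform P a m"
proof (rule peval_inject)
  fix w :: "real \<times> real"
  obtain u v where w: "w = (u,v)" by (cases w)
  let ?N = "taylor_bound P a"
  have monomial: "tcoeff P a i j * u ^ i * (u * v) ^ j =
    u ^ m * ((if m \<le> i + j then tcoeff P a i j else 0) * u ^ (i + j - m) * v ^ j)" for i j
  proof (cases "m \<le> i + j")
    case True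
    then have "u ^ i * u ^ j = u ^ m * u ^ (i + j - m)" by (simp add: power_add[symmetric])
    then show ?thesis using True by (simp add: power_mult_distrib algebra_simps)
  next
    case False
    then have "i + j < m" by simp
    then have "tcoeff P a i (i + j - i) = 0" using low le_add1 unfolding vanishes_below_def by blast
    then show ?thesis using False by simp
  qed
  have "peval (chart_pullback a P) w = (\<Sum>i<?N. \<Sum>j<?N. tcoeff P a i j * u ^ i * (u * v) ^ j)"
    by (simp add: peval_chart_pullback chart1_def w taylor_expansion)
  also have "\<dots> = peval (Xvar ^ m * strict_transform P a m) w"
    by (simp add: monomial w strict_transform_def sum_distrib_left poly_monom)
  finally show "peval (chart_pullback a P) w = peval (Xvar ^ m * strict_transform P a m) w" .
qed

lemma strict_transform_on_divisor:
  "peval (strict_transform P a m) (0, v) = homog_comp P a m (fst a + 1, snd a + v)"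
proof -
  let ?N = "taylor_bound P a"
  let ?c = "\<lambda>i. tcoeff P a i (m - i) * v ^ (m - i)"
  have "peval (strict_transform P a m) (0, v) = (\<Sum>i<?N. \<Sum>j<?N.
      (if m \<le> i + j then tcoeff P a i j else 0) * 0 ^ (i + j - m) * v ^ j)"
    by (simp add: strict_transform_def poly_monom)
  also have "\<dots> = (\<Sum>i<?N. \<Sum>j<?N. if j = m - i then (if i \<le> m then ?c i else 0) else 0)"
    by (intro sum.cong refl) (auto simp: zero_power)
  also have "\<dots> = (\<Sum>i<?N. if m - i < ?N then (if i \<le> m then ?c i else 0) else 0)"
    by (simp add: sum.delta')
  also have "\<dots> = (\<Sum>i<?N + m + 1. if i \<le> m then ?c i else 0)"
    by (rule sum.mono_neutral_cong_left) (auto simp: tcoeff_beyond_bound)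
  also have "\<dots> = (\<Sum>i\<in>{i\<in>{..<?N + m + 1}. i \<le> m}. ?c i)"
    by (rule sum.inter_filter[symmetric]) simp
  also have "{i\<in>{..<?N + m + 1}. i \<le> m} = {..m}" by auto
  also have "(\<Sum>i\<in>{..m}. ?c i) = homog_comp P a m (fst a + 1, snd a + v)"
    by (simp add: homog_comp_def)
  finally show ?thesis .
qed

section \<open>Common factors of pullbacks of coprime polynomials\<close>

text \<open>The pushforward along the first chart at the origin: for a polynomial g of degree
  below N in y, pushforward N g (x,y) = x^N g(x, y/x) off the axis x = 0. It is
  multiplicative and inverts the pullback up to a power of x.\<close>
definition pushforward :: "nat \<Rightarrow> real poly poly \<Rightarrow> real poly poly" where
  "pushforward N g = (\<Sum>j<N. monom (coeff g j * [:0,1:] ^ (N - j)) j)"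

lemma peval_pushforward:
  assumes "degree g < N" "x \<noteq> 0"
  shows "peval (pushforward N g) (x,y) = x ^ N * peval g (x, y / x)"
proof -
  have deg: "degree (map_poly (\<lambda>c. poly c x) g) < N"
    using map_poly_degree_leq[of "\<lambda>c. poly c x" g] assms(1) by linarith
  have "peval (pushforward N g) (x,y) = (\<Sum>j<N. poly (coeff g j) x * x ^ (N - j) * y ^ j)"
    by (simp add: pushforward_def poly_power mult.assoc)
  also have "\<dots> = (\<Sum>j<N. x ^ N * (poly (coeff g j) x * (y / x) ^ j))"
  proof (rule sum.cong[OF refl])
    fix j assume "j \<in> {..<N}"
    then have "x ^ N = x ^ (N - j) * x ^ j" by (simp add: power_add[symmetric])
    then show "poly (coeff g j) x * x ^ (N - j) * y ^ j = x ^ N * (poly (coeff g j) x * (y / x) ^ j)"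
      using assms(2) by (simp add: power_divide field_simps)
  qed
  also have "\<dots> = x ^ N * peval g (x, y / x)"
    unfolding peval_in_y poly_as_sum_below[OF deg] by (simp add: sum_distrib_left coeff_map_poly)
  finally show ?thesis .
qed

lemma pushforward_on_chart:
  "degree g < N \<Longrightarrow> u \<noteq> 0 \<Longrightarrow> peval (pushforward N g) (u, u * v) = u ^ N * peval g (u, v)"
  by (simp add: peval_pushforward)

lemma pushforward_mult:
  assumes "degree g < D" "degree h < E"
  shows "pushforward (D + E) (g * h) = pushforward D g * pushforward E h"
proof (rule peval_eq_off_axis)
  fix x y :: real assume x: "x \<noteq> 0"
  have "degree (g * h) < D + E" using degree_mult_le[of g h] assms by linarith
  then show "peval (pushforward (D + E) (g * h)) (x,y) = peval (pushforward D g * pushforward E h) (x,y)"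
    using x assms by (simp add: peval_pushforward power_add)
qed

lemma pushforward_chart_pullback:
  assumes "degree (chart_pullback a P) < N"
  shows "pushforward N (chart_pullback a P) = Xvar ^ N * shift P a"
proof (rule peval_eq_off_axis)
  fix x y :: real assume "x \<noteq> 0"
  then show "peval (pushforward N (chart_pullback a P)) (x,y) = peval (Xvar ^ N * shift P a) (x,y)"
    using assms by (simp add: peval_pushforward peval_chart_pullback chart1_def peval_shift)
qed

lemma pushforward_nonzero:
  assumes "g \<noteq> 0" "degree g < N"
  shows "pushforward N g \<noteq> 0"
proof
  assume "pushforward N g = 0"
  then have "peval g (x,y) = peval 0 (x,y)" if "x \<noteq> 0" for x y
    using pushforward_on_chart[OF assms(2) that, of y] that by simp
  then show False using assms(1) peval_eq_off_axis by blast
qed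

lemma pushforward_dvd_shift:
  assumes "chart_pullback a P = g * h"
  shows "pushforward (Suc (degree g)) g dvd Xvar ^ (Suc (degree g) + Suc (degree h)) * shift P a"
proof -
  define D E where "D = Suc (degree g)" and "E = Suc (degree h)"
  have "degree (chart_pullback a P) < D + E"
    using degree_mult_le[of g h] assms unfolding D_def E_def by simp
  then have "Xvar ^ (D + E) * shift P a = pushforward (D + E) (chart_pullback a P)"
    by (rule pushforward_chart_pullback[symmetric])
  also have "\<dots> = pushforward D g * pushforward E h"
    unfolding assms by (rule pushforward_mult) (auto simp: D_def E_def)
  finally show ?thesis unfolding D_def E_def by (metis dvd_triv_left)
qed

text \<open>The pullbacks of two coprime polynomials have no common prime factor other than
  the exceptional divisor x = 0: the pushforward G of a common prime factor g divides
  both polynomials up to powers of x, so G is a power of x times a constant, and then so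
  is g.\<close>
lemma chart_pullback_common_prime_factor:
  assumes cop: "coprime A B" and g: "prime_elem g"
    and gA: "g dvd chart_pullback a A" and gB: "g dvd chart_pullback a B"
  shows "Xvar dvd g"
proof -
  define D where "D = Suc (degree g)"
  define G where "G = pushforward D g"
  have "G \<noteq> 0" unfolding G_def D_def by (rule pushforward_nonzero) (use g in auto)
  moreover have "\<not> is_unit Xvar" using Xvar_prime by (simp add: prime_elem_def)
  ultimately obtain G' where G': "G = Xvar ^ multiplicity Xvar G * G'" "\<not> Xvar dvd G'"
    using multiplicity_decompose' by blast
  define e where "e = multiplicity Xvar G"
  have G'_dvd: "G' dvd shift P a" if gP: "g dvd chart_pullback a P" for P
  proof -
    obtain h where "chart_pullback a P = g * h" using gP by blast
    then have "G dvd Xvar ^ (D + Suc (degree h)) * shift P a"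
      unfolding G_def D_def by (rule pushforward_dvd_shift)
    moreover have "G' dvd G" using G'(1) by (metis dvd_triv_right)
    ultimately have "G' dvd Xvar ^ (D + Suc (degree h)) * shift P a" using dvd_trans by blast
    moreover have "coprime G' (Xvar ^ (D + Suc (degree h)))"
      using prime_elem_imp_coprime[OF Xvar_prime G'(2)] by (simp add: coprime_commute)
    ultimately show ?thesis using coprime_dvd_mult_right_iff by blast
  qed
  have "is_unit G'"
    using coprime_common_divisor[OF coprime_shift[OF cop] G'_dvd[OF gA] G'_dvd[OF gB]] .
  then obtain c where c: "G' = [:c:]" "is_unit c" using is_unit_poly_iff by blast
  then obtain k where k: "c = [:k:]" "is_unit k" using is_unit_poly_iff by blast
  let ?K = "[:[:k:]:] :: real poly poly"
  have K_unit: "is_unit ?K" using k by (simp add: is_unit_poly_iff)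
  have g_monomial: "Xvar ^ D * g = ?K * Xvar ^ e"
  proof (rule peval_eq_off_axis)
    fix x y :: real assume x: "x \<noteq> 0"
    have "x ^ D * peval g (x,y) = peval G (x, x * y)"
      unfolding G_def by (rule pushforward_on_chart[symmetric, OF _ x]) (simp add: D_def)
    also have "\<dots> = x ^ e * k"
    proof -
      have "G = Xvar ^ e * ?K" using G'(1) c k unfolding e_def by simp
      then show ?thesis by simp
    qed
    finally show "peval (Xvar ^ D * g) (x,y) = peval (?K * Xvar ^ e) (x,y)" by simp
  qed
  show ?thesis
  proof (cases "e \<le> D")
    case True
    then have "Xvar ^ e * (Xvar ^ (D - e) * g - ?K) = 0"
      using g_monomial by (simp add: algebra_simps power_add[symmetric])
    then have "Xvar ^ (D - e) * g = ?K" using Xvar_nonzero by simp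
    then have "g dvd ?K" by (metis dvd_triv_right)
    then have "is_unit g" using K_unit dvd_trans by blast
    then show ?thesis using g by (simp add: prime_elem_def)
  next
    case False
    then have "Xvar ^ D * (g - ?K * Xvar ^ (e - D)) = 0"
      using g_monomial by (simp add: algebra_simps power_add[symmetric])
    then have "g = ?K * Xvar ^ (e - D)" using Xvar_nonzero by simp
    then show ?thesis using False by (metis dvd_mult dvd_power zero_less_diff not_le)
  qed
qed

lemma isCont_eq_at_0:
  fixes g h :: "real \<Rightarrow> real"
  assumes "isCont g 0" "isCont h 0" "\<And>u. u \<noteq> 0 \<Longrightarrow> g u = h u"
  shows "g 0 = h 0"
proof -
  have "eventually (\<lambda>u. h u = g u) (at 0)"
    unfolding eventually_at using assms(3) by (intro exI[of _ 1]) auto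
  then have "(g \<longlongrightarrow> h 0) (at 0)" using assms(2) tendsto_cong isCont_def by blast
  then show ?thesis using assms(1) isCont_def LIM_unique by blast
qed

lemma isCont_negative_near_0:
  fixes g :: "real \<Rightarrow> real"
  assumes "isCont g 0" "g 0 < 0"
  obtains d where "d > 0" "\<And>u. \<bar>u\<bar> < d \<Longrightarrow> g u < 0"
proof -
  from assms(1) have "\<forall>r>0. \<exists>s>0. \<forall>x. x \<noteq> 0 \<and> norm (x - 0) < s \<longrightarrow> norm (g x - g 0) < r"
    unfolding isCont_def LIM_eq by blast
  then obtain d where d: "d > 0" "\<forall>x. x \<noteq> 0 \<and> norm (x - 0) < d \<longrightarrow> norm (g x - g 0) < - g 0"
    using assms(2) by (meson neg_0_less_iff_less)
  have "g u < 0" if "\<bar>u\<bar> < d" for u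
    using d(2) assms(2) that by (cases "u = 0") force+
  then show ?thesis using d(1) that by blast
qed

lemma isCont_f_chart1:
  assumes "continuous_on UNIV f"
  shows "isCont (\<lambda>u. f (chart1 a (u, v))) x"
proof (rule isCont_o2[where f="\<lambda>u. chart1 a (u, v)" and g=f])
  show "isCont (\<lambda>u. chart1 a (u, v)) x" unfolding chart1_def by (intro continuous_intros)
  show "isCont f (chart1 a (x, v))" using assms continuous_on_eq_continuous_at by blast
qed

lemma chart1_representation_identity:
  assumes H: "continuous_quotient f p q" and "Q \<noteq> 0" "chart_pullback a q \<noteq> 0"
    and rep: "\<forall>w. peval Q w \<noteq> 0 \<longrightarrow> f (chart1 a w) = peval P w / peval Q w"
  shows "chart_pullback a p * Q = P * chart_pullback a q"
proof (rule peval_eq_off_zeros[of "Q * chart_pullback a q"])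
  show "Q * chart_pullback a q \<noteq> 0" using assms(2,3) by simp
  fix w assume "peval (Q * chart_pullback a q) w \<noteq> 0"
  then have w: "peval Q w \<noteq> 0" "peval q (chart1 a w) \<noteq> 0" by (auto simp: peval_chart_pullback)
  have "f (chart1 a w) = peval P w / peval Q w" using rep w(1) by blast
  moreover have "f (chart1 a w) = peval p (chart1 a w) / peval q (chart1 a w)"
    by (rule continuous_quotient_value[OF H w(2)])
  ultimately show "peval (chart_pullback a p * Q) w = peval (P * chart_pullback a q) w"
    using w by (simp add: peval_chart_pullback field_simps)
qed

text \<open>If f o chart1 is regular at the point (0,v0) of the exceptional divisor, then the
  strict transform of q does not vanish there. Otherwise a prime factor g of the strict
  transform through (0,v0) does not divide the denominator Q of the local
  representation, hence divides the pullback of p as well as that of q, so it is the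
  exceptional divisor; but the strict transform is not divisible by x.\<close>
lemma chart1_regular_imp_initial_nonzero:
  assumes H: "continuous_quotient f p q" and ord: "is_order q a m"
    and reg: "regular_at (f \<circ> chart1 a) (0, v0)"
  shows "homog_comp q a m (fst a + 1, snd a + v0) \<noteq> 0"
proof
  assume zero: "homog_comp q a m (fst a + 1, snd a + v0) = 0"
  define qt where "qt = strict_transform q a m"
  have pull_q: "chart_pullback a q = Xvar ^ m * qt"
    unfolding qt_def using ord by (simp add: is_order_def chart_pullback_factor)
  obtain v1 where "homog_comp q a m (fst a + 1, snd a + v1) \<noteq> 0"
    using ord initial_form_line_nonzero unfolding is_order_def by blast
  then have not_X_dvd: "\<not> Xvar dvd qt"
    unfolding Xvar_dvd_iff qt_def strict_transform_on_divisor by blast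
  then have "qt \<noteq> 0" by auto
  then obtain g where g: "prime_elem g" "g dvd qt" "peval g (0,v0) = 0"
    using prime_factor_vanishing[of qt "(0,v0)"] zero by (auto simp: qt_def strict_transform_on_divisor)
  obtain P Q where PQ: "peval Q (0,v0) \<noteq> 0"
    "\<forall>w. peval Q w \<noteq> 0 \<longrightarrow> f (chart1 a w) = peval P w / peval Q w"
    using reg unfolding regular_at_def by auto
  have "Q \<noteq> 0" using PQ(1) by auto
  moreover have "chart_pullback a q \<noteq> 0" using pull_q \<open>qt \<noteq> 0\<close> Xvar_nonzero by simp
  ultimately have identity: "chart_pullback a p * Q = P * chart_pullback a q"
    using chart1_representation_identity[OF H _ _ PQ(2)] by blast
  have g_q: "g dvd chart_pullback a q" using g(2) pull_q by simp
  have "\<not> g dvd Q" using PQ(1) g(3) by (auto elim!: dvdE)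
  moreover have "g dvd chart_pullback a p * Q" using g_q identity by (metis dvd_mult)
  ultimately have g_p: "g dvd chart_pullback a p" using prime_elem_dvd_mult_iff[OF g(1)] by blast
  have "coprime p q" using H unfolding continuous_quotient_def by blast
  then have "Xvar dvd g" using chart_pullback_common_prime_factor g(1) g_p g_q by blast
  then show False using not_X_dvd g(2) dvd_trans by blast
qed

lemma continuous_quotient_chart1:
  assumes "continuous_quotient f p q"
  shows "f (chart1 a w) * peval (chart_pullback a q) w = peval (chart_pullback a p) w"
  using assms unfolding continuous_quotient_def peval_chart_pullback by blast

text \<open>The order of p at a is at least that of q: if p had smaller order k, then along a
  line v = v1 through the divisor, f o chart1 times u^(m-k) times the strict transform of q
  would equal the strict transform of p, whose value at (0,v1) is nonzero, yet the left
  side tends to 0.\<close>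
lemma continuous_quotient_numerator_order:
  assumes H: "continuous_quotient f p q" and low: "vanishes_below q a m"
  shows "vanishes_below p a m"
proof (cases "p = 0")
  case True
  then show ?thesis by (simp add: vanishes_below_def tcoeff_def shift_def)
next
  case False
  then obtain k where ord_p: "is_order p a k" by (rule order_exists)
  show ?thesis
  proof (cases "m \<le> k")
    case True
    then show ?thesis using ord_p unfolding is_order_def vanishes_below_def by auto
  next
    case False
    define pt qt where "pt = strict_transform p a k" and "qt = strict_transform q a m"
    have pull_p: "chart_pullback a p = Xvar ^ k * pt"
      unfolding pt_def using ord_p by (simp add: is_order_def chart_pullback_factor)
    have pull_q: "chart_pullback a q = Xvar ^ m * qt"
      unfolding qt_def using low by (simp add: chart_pullback_factor)
    obtain v1 where v1: "peval pt (0, v1) \<noteq> 0"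
      using ord_p initial_form_line_nonzero unfolding is_order_def pt_def strict_transform_on_divisor
      by blast
    have "(\<lambda>u. f (chart1 a (u, v1)) * u ^ (m - k) * peval qt (u, v1)) 0 = (\<lambda>u. peval pt (u, v1)) 0"
    proof (rule isCont_eq_at_0)
      show "isCont (\<lambda>u. f (chart1 a (u, v1)) * u ^ (m - k) * peval qt (u, v1)) 0"
        using H unfolding continuous_quotient_def
        by (intro continuous_intros isCont_f_chart1 isCont_peval_in_x) auto
      show "isCont (\<lambda>u. peval pt (u, v1)) 0" by (rule isCont_peval_in_x)
      fix u :: real assume "u \<noteq> 0"
      have split: "u ^ m = u ^ k * u ^ (m - k)" using False by (simp add: power_add[symmetric])
      have "f (chart1 a (u, v1)) * (u ^ m * peval qt (u, v1)) = u ^ k * peval pt (u, v1)"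
        using continuous_quotient_chart1[OF H, of a "(u, v1)"] pull_p pull_q by simp
      then have "u ^ k * (f (chart1 a (u, v1)) * u ^ (m - k) * peval qt (u, v1)) = u ^ k * peval pt (u, v1)"
        unfolding split by (simp only: ac_simps)
      then show "f (chart1 a (u, v1)) * u ^ (m - k) * peval qt (u, v1) = peval pt (u, v1)"
        using \<open>u \<noteq> 0\<close> by simp
    qed
    moreover have "(0::real) ^ (m - k) = 0" using False by simp
    ultimately show ?thesis using v1 by simp
  qed
qed

text \<open>Conversely, where the strict transform of q does not vanish, f o chart1 is the
  quotient of the strict transforms of p and q, which holds on the divisor by continuity.\<close>
lemma chart1_regular_if_initial_nonzero:
  assumes H: "continuous_quotient f p q" and low: "vanishes_below q a m"
    and nonzero: "homog_comp q a m (fst a + 1, snd a + v0) \<noteq> 0"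
  shows "regular_at (f \<circ> chart1 a) (0, v0)"
proof -
  define P Q where "P = strict_transform p a m" and "Q = strict_transform q a m"
  have pull_p: "chart_pullback a p = Xvar ^ m * P"
    unfolding P_def using continuous_quotient_numerator_order[OF H low]
    by (simp add: chart_pullback_factor)
  have pull_q: "chart_pullback a q = Xvar ^ m * Q"
    unfolding Q_def using low by (simp add: chart_pullback_factor)
  have off_divisor: "f (chart1 a (u, v)) * peval Q (u, v) = peval P (u, v)" if "u \<noteq> 0" for u v
    using continuous_quotient_chart1[OF H, of a "(u, v)"] pull_p pull_q that by simp
  have quotient: "f (chart1 a (u, v)) * peval Q (u, v) = peval P (u, v)" for u v
  proof (cases "u = 0")
    case True
    have "(\<lambda>u. f (chart1 a (u, v)) * peval Q (u, v)) 0 = (\<lambda>u. peval P (u, v)) 0"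
    proof (rule isCont_eq_at_0)
      show "isCont (\<lambda>u. f (chart1 a (u, v)) * peval Q (u, v)) 0"
        using H unfolding continuous_quotient_def
        by (intro continuous_intros isCont_f_chart1 isCont_peval_in_x) auto
    qed (use off_divisor isCont_peval_in_x in auto)
    then show ?thesis using True by simp
  qed (rule off_divisor)
  have "peval Q (0, v0) \<noteq> 0" using nonzero unfolding Q_def strict_transform_on_divisor .
  moreover have "(f \<circ> chart1 a) w = peval P w / peval Q w" if "peval Q w \<noteq> 0" for w
    using quotient[of "fst w" "snd w"] that by (simp add: field_simps)
  ultimately show ?thesis unfolding regular_at_def by blast
qed

lemma chart1_regular_iff:
  assumes "continuous_quotient f p q" "is_order q a m"
  shows "regular_at (f \<circ> chart1 a) (0, v) \<longleftrightarrow> homog_comp q a m (fst a + 1, snd a + v) \<noteq> 0"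
  using chart1_regular_imp_initial_nonzero chart1_regular_if_initial_nonzero assms
  unfolding is_order_def by blast

section \<open>Initial forms of nonnegative polynomials\<close>

text \<open>For a nonnegative polynomial, u^m times the strict transform is nonnegative near the
  exceptional divisor; so a nonvanishing dehomogenised initial form is positive, and
  m is even.\<close>
lemma nonneg_initial_form_line_pos:
  assumes nonneg: "\<forall>z. peval P z \<ge> 0" and low: "vanishes_below P a m"
    and nonzero: "\<forall>v. homog_comp P a m (fst a + 1, snd a + v) \<noteq> 0"
  shows "(\<forall>v. homog_comp P a m (fst a + 1, snd a + v) > 0) \<and> even m"
proof -
  define st where "st = strict_transform P a m"
  have divisor: "peval st (0, v) = homog_comp P a m (fst a + 1, snd a + v)" for v
    unfolding st_def by (rule strict_transform_on_divisor)
  have nn: "u ^ m * peval st (u, v) \<ge> 0" for u v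
    using nonneg chart_pullback_factor[OF low] peval_chart_pullback[of a P "(u, v)"]
    unfolding st_def by (metis peval_Xvar peval_mult peval_power fst_conv)
  have pos: "homog_comp P a m (fst a + 1, snd a + v) > 0" for v
  proof (rule ccontr)
    assume "\<not> homog_comp P a m (fst a + 1, snd a + v) > 0"
    then have "peval st (0, v) < 0" using nonzero divisor by (simp add: not_less order_le_less)
    then obtain d where d: "d > 0" "\<And>u. \<bar>u\<bar> < d \<Longrightarrow> peval st (u, v) < 0"
      using isCont_negative_near_0[OF isCont_peval_in_x] by blast
    then have "(d/2) ^ m * peval st (d/2, v) < 0" by (simp add: mult_pos_neg)
    then show False using nn[of "d/2" v] by simp
  qed
  have "even m"
  proof (rule ccontr)
    assume "odd m"
    have "(\<lambda>u. - peval st (u, 0)) 0 < 0" using pos[of 0] divisor by simp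
    then obtain d where d: "d > 0" "\<And>u. \<bar>u\<bar> < d \<Longrightarrow> - peval st (u, 0) < 0"
      using isCont_negative_near_0[of "\<lambda>u. - peval st (u, 0)"] isCont_peval_in_x
      by (metis continuous_minus)
    then have "(- d/2) ^ m * peval st (- d/2, 0) < 0"
      using \<open>odd m\<close> by (simp add: mult_neg_pos)
    then show False using nn[of "- d/2" 0] by simp
  qed
  then show ?thesis using pos by blast
qed

lemma nonneg_initial_form_pos:
  assumes nonneg: "\<forall>z. peval P z \<ge> 0" and low: "vanishes_below P a m"
    and nonzero: "\<forall>w. w \<noteq> a \<longrightarrow> homog_comp P a m w \<noteq> 0"
  shows "\<forall>w. w \<noteq> a \<longrightarrow> homog_comp P a m w > 0"
proof (intro allI impI)
  have lines: "\<forall>v. homog_comp P a m (fst a + 1, snd a + v) \<noteq> 0"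
      "\<forall>u. homog_comp P a m (fst a + u, snd a + 1) \<noteq> 0"
    using nonzero homog_comp_nonzero_iff_lines by blast+
  have line1: "\<forall>v. homog_comp P a m (fst a + 1, snd a + v) > 0" and "even m"
    using nonneg_initial_form_line_pos[OF nonneg low lines(1)] by blast+
  have swapped: "homog_comp (swap_vars P) (prod.swap a) m (snd a + 1, fst a + u)
      = homog_comp P a m (fst a + u, snd a + 1)" for u
    using homog_comp_swap_vars[of P a m "(fst a + u, snd a + 1)"] by simp
  have line2: "\<forall>u. homog_comp P a m (fst a + u, snd a + 1) > 0"
    using nonneg_initial_form_line_pos[of "swap_vars P" "prod.swap a" m] lines(2)
      vanishes_below_swap_vars[OF low] nonneg
    by (simp add: swapped peval_swap_vars)
  fix w assume "w \<noteq> a"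
  define s t where "s = fst w - fst a" and "t = snd w - snd a"
  show "homog_comp P a m w > 0"
  proof (cases "s = 0")
    case False
    then have "w = (fst a + s * 1, snd a + s * (t / s))" by (simp add: s_def t_def)
    then have "homog_comp P a m w = s ^ m * homog_comp P a m (fst a + 1, snd a + t / s)"
      by (simp only: homog_comp_scale)
    moreover have "s ^ m > 0" using \<open>even m\<close> False by (simp add: zero_less_power_eq)
    ultimately show ?thesis using line1 by simp
  next
    case True
    then have "t \<noteq> 0" using \<open>w \<noteq> a\<close> by (auto simp: s_def t_def prod_eq_iff)
    have "w = (fst a + t * 0, snd a + t * 1)" using True by (simp add: s_def t_def prod_eq_iff)
    then have "homog_comp P a m w = t ^ m * homog_comp P a m (fst a + 0, snd a + 1)"
      by (simp only: homog_comp_scale)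
    moreover have "t ^ m > 0" using \<open>even m\<close> \<open>t \<noteq> 0\<close> by (simp add: zero_less_power_eq)
    ultimately show ?thesis using line2[rule_format, of 0] by simp
  qed
qed

lemma loc_pos_def_iff_initial_nonzero:
  assumes nonneg: "\<forall>z. peval P z \<ge> 0" and ord: "is_order P a m"
  shows "loc_pos_def P a \<longleftrightarrow> (\<forall>w. w \<noteq> a \<longrightarrow> homog_comp P a m w \<noteq> 0)"
proof
  assume "loc_pos_def P a"
  then obtain m' where "is_order P a m'" "\<forall>w. w \<noteq> a \<longrightarrow> homog_comp P a m' w > 0"
    unfolding loc_pos_def_iff_order by blast
  then show "\<forall>w. w \<noteq> a \<longrightarrow> homog_comp P a m w \<noteq> 0"
    using order_unique[OF ord] by force
next
  assume "\<forall>w. w \<noteq> a \<longrightarrow> homog_comp P a m w \<noteq> 0"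
  then show "loc_pos_def P a"
    using nonneg_initial_form_pos[OF nonneg _] ord unfolding loc_pos_def_iff_order is_order_def
    by blast
qed

section \<open>The second chart, by symmetry\<close>

lemma continuous_quotient_swap:
  assumes "continuous_quotient f p q"
  shows "continuous_quotient (f \<circ> prod.swap) (swap_vars p) (swap_vars q)"
proof -
  have "continuous_on UNIV f" "coprime p q" "\<forall>z. f z * peval q z = peval p z"
    using assms unfolding continuous_quotient_def by blast+
  moreover have "continuous_on UNIV (f \<circ> prod.swap)" if "continuous_on UNIV f"
    by (rule continuous_on_compose) (auto intro: continuous_intros continuous_on_subset[OF that])
  ultimately show ?thesis
    unfolding continuous_quotient_def by (simp add: coprime_swap_vars peval_swap_vars)
qed

lemma regular_at_swap:
  assumes "regular_at g z"
  shows "regular_at (g \<circ> prod.swap) (prod.swap z)"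
proof -
  obtain P Q where "peval Q z \<noteq> 0" "\<forall>w. peval Q w \<noteq> 0 \<longrightarrow> g w = peval P w / peval Q w"
    using assms unfolding regular_at_def by blast
  then show ?thesis unfolding regular_at_def
    by (intro exI[of _ "swap_vars P"] exI[of _ "swap_vars Q"]) (auto simp: peval_swap_vars)
qed

lemma chart2_as_swapped_chart1:
  "f \<circ> chart2 a = ((f \<circ> prod.swap) \<circ> chart1 (prod.swap a)) \<circ> prod.swap"
  by (auto simp: fun_eq_iff chart1_def chart2_def mult.commute)

lemma chart2_regular_iff:
  assumes H: "continuous_quotient f p q" and ord: "is_order q a m"
  shows "regular_at (f \<circ> chart2 a) (u, 0) \<longleftrightarrow> homog_comp q a m (fst a + u, snd a + 1) \<noteq> 0"
proof -
  let ?g = "(f \<circ> prod.swap) \<circ> chart1 (prod.swap a)"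
  have swap_twice: "h \<circ> prod.swap \<circ> prod.swap = h" for h :: "real \<times> real \<Rightarrow> real"
    by (auto simp: fun_eq_iff)
  have "regular_at (f \<circ> chart2 a) (u, 0) \<longleftrightarrow> regular_at ?g (0, u)"
    using regular_at_swap[of ?g "(0, u)"] regular_at_swap[of "f \<circ> chart2 a" "(u, 0)"]
    unfolding chart2_as_swapped_chart1 swap_twice by auto
  also have "\<dots> \<longleftrightarrow> homog_comp (swap_vars q) (prod.swap a) m (fst (prod.swap a) + 1, snd (prod.swap a) + u) \<noteq> 0"
    by (rule chart1_regular_iff[OF continuous_quotient_swap[OF H] is_order_swap_vars[OF ord]])
  also have "homog_comp (swap_vars q) (prod.swap a) m (fst (prod.swap a) + 1, snd (prod.swap a) + u)
      = homog_comp q a m (fst a + u, snd a + 1)"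
    using homog_comp_swap_vars[of q a m "(fst a + u, snd a + 1)"] by simp
  finally show ?thesis .
qed

lemma blowup_regular_iff:
  assumes "continuous_quotient f p q" "is_order q a m"
  shows "((\<forall>v. regular_at (f \<circ> chart1 a) (0, v)) \<and> (\<forall>u. regular_at (f \<circ> chart2 a) (u, 0)))
     \<longleftrightarrow> (\<forall>w. w \<noteq> a \<longrightarrow> homog_comp q a m w \<noteq> 0)"
  unfolding homog_comp_nonzero_iff_lines chart1_regular_iff[OF assms] chart2_regular_iff[OF assms] ..

theorem theorem3p2:
  fixes f :: "real \<times> real \<Rightarrow> real" and p q :: "real poly poly"
  assumes "regulous f"
    and "coprime p q"
    and "\<forall>z. peval q z \<ge> 0"
    and "\<forall>z\<in>rdom f. peval q z \<noteq> 0"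
    and "\<forall>z\<in>rdom f. f z = peval p z / peval q z"
  shows "f \<in> R0_1 \<longleftrightarrow> (\<forall>a\<in>pol f. loc_pos_def q a)"
proof -
  have H: "reduced_rep f p q" using assms unfolding reduced_rep_def by blast
  have quot: "continuous_quotient f p q" by (rule reduced_rep_continuous_quotient[OF H])
  have pol: "pol f = {z. peval q z = 0}" by (rule reduced_rep_pol[OF H])
  have blowup_at: "((\<forall>v. regular_at (f \<circ> chart1 a) (0, v)) \<and> (\<forall>u. regular_at (f \<circ> chart2 a) (u, 0)))
      \<longleftrightarrow> loc_pos_def q a" for a
  proof -
    obtain m where ord: "is_order q a m" using order_exists[OF reduced_rep_q_nonzero[OF H]] .
    show ?thesis
      unfolding blowup_regular_iff[OF quot ord] loc_pos_def_iff_initial_nonzero[OF assms(3) ord] ..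
  qed
  show ?thesis
  proof
    assume "f \<in> R0_1"
    then obtain S where S: "regular_after_blowup S f" unfolding R0_1_def by blast
    then have "pol f \<subseteq> S"
      using regular_at_imp_rdom unfolding regular_after_blowup_def pol_def by blast
    then show "\<forall>a\<in>pol f. loc_pos_def q a"
      using S blowup_at unfolding regular_after_blowup_def by blast
  next
    assume "\<forall>a\<in>pol f. loc_pos_def q a"
    moreover have "finite (pol f)" using reduced_rep_zeros_finite[OF H] pol by simp
    moreover have "regular_at f z" if "z \<notin> pol f" for z
      using continuous_quotient_regular_at[OF quot] that pol by blast
    ultimately have "regular_after_blowup (pol f) f"
      using blowup_at unfolding regular_after_blowup_def by blast
    then show "f \<in> R0_1" unfolding R0_1_def using assms(1) by blast
  qed
qed

end
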